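(* Assume: (i) for each $j\in N$ there exists $x^{s,*}_j$ with $f_j(x^{s,*}_j,0)=0$; (ii) there exists at least one bus $j\in N$ such that whenever $f_j(\bar x^s_j,-\bar\omega_j)=0$ for constants $\bar x^s_j\in\mathbb{R}^{n_j},\bar\omega_j\in\mathbb{R}$, then $\bar\omega_j=0$; (iii) there exists an equilibrium of $\dot x\in Q(x)$. Then every equilibrium $x^*=(\eta^*,\omega^*,x^{s,*})$ of $\dot x\in Q(x)$ satisfies $\omega^*=0\in\mathbb{R}^{|N|}$ and $Q(x^* )=\{0_n\}$ (in particular $d^c_j=f^c_j(\omega^*_j)=0$ for all $j$).
   Context: Network model. $(N,E)$ is a connected directed graph with $N=\{1,\dots,|N|\}$, $E\subseteq N\times N$, with arbitrary orientation: if $(i,j)\in E$ then $(j,i)\notin E$. For $j\in N$, "$i:i\to j$" ranges over $i$ with $(i,j)\in E$ and "$k:j\to k$" over $k$ with $(j,k)\in E$. Constants: $M_j>0$, $p^L_j\in\mathbb{R}$ ($j\in N$), $B_{ij}>0$ ($(i,j)\in E$). States: $\eta_{ij}\in\mathbb{R}$ for $(i,j)\in E$, $\omega_j\in\mathbb{R}$ and $x^s_j\in\mathbb{R}^{n_j}$ for $j\in N$; the full state is $x=(\eta,\omega,x^s)\in\mathbb{R}^n$, $n=|E|+|N|+\sum_j n_j$. The dynamics are $\dot\eta_{ij}=\omega_i-\omega_j$, $(i,j)\in E$; $M_j\dot\omega_j=-p^L_j+s_j-d^c_j-\sum_{k:j\to k}p_{jk}+\sum_{i:i\to j}p_{ij}$,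 $j\in N$; $p_{ij}=B_{ij}\sin\eta_{ij}$; $\dot x^s_j=f_j(x^s_j,-\omega_j)$, $s_j=g_j(x^s_j,-\omega_j)$, where $f_j:\mathbb{R}^{n_j}\times\mathbb{R}\to\mathbb{R}^{n_j}$ and $g_j:\mathbb{R}^{n_j}\times\mathbb{R}\to\mathbb{R}$ are globally Lipschitz. On-off loads. For each $j$, constants $-\infty<\underline d_j\le 0\le\overline d_j<\infty$ and $\underline\omega_j<0<\overline\omega_j$ are given, and $d^c_j=f^c_j(\omega_j)$ where $f^c_j(\omega)=\overline d_j$ if $\omega>\overline\omega_j$, $=0$ if $\underline\omega_j<\omega\le\overline\omega_j$, $=\underline d_j$ if $\omega\le\underline\omega_j$. Its Filippov set-valued map is $F[d^c_j](\omega)=[0,\overline d_j]$ if $\omega=\overline\omega_j$, $[\underline d_j,0]$ if $\omega=\underline\omega_j$, and $\{f^c_j(\omega)\}$ otherwise. The set-valued map $Q(x)$ has components: $\{\omega_i-\omega_j\}$ for each $(i,j)\in E$; $\{\frac1{M_j}(-p^L_j+s_j-v_j-\sum_{k:j\to k}p_{jk}+\sum_{i:i\to j}p_{ij}): v_j\in F[d^c_j](\omega_j)\}$ for each $j\in N$; $\{f_j(x^s_j,-\omega_j)\}$ for each $j\in N$. A point $x^*$ is an equilibrium of $\dot x\in Q(x)$ if $0_n\in Q(x^* )$. *)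

theory Defs
  imports Complex_Main
begin

type_synonym bus = nat
type_synonym vecS = "nat \<Rightarrow> real"
(* full state x = (eta, omega, xs):  eta indexed by edges, omega by buses,
   xs j :: vecS is the controller state of bus j (a vector in R^(nj j),
   components with index \<ge> nj j are zero) *)
type_synonym state = "((nat \<times> nat) \<Rightarrow> real) \<times> (nat \<Rightarrow> real) \<times> (nat \<Rightarrow> vecS)"

definition Rvec :: "nat \<Rightarrow> vecS set" where
  "Rvec m = {x. \<forall>i\<ge>m. x i = 0}"

definition normS :: "nat \<Rightarrow> vecS \<Rightarrow> real" where
  "normS m x = sqrt (\<Sum>i<m. (x i)^2)"

definition glob_lipschitz_f :: "nat \<Rightarrow> (vecS \<Rightarrow> real \<Rightarrow> vecS) \<Rightarrow> bool" where
  "glob_lipschitz_f m h \<longleftrightarrow> (\<exists>L. \<forall>x\<in>Rvec m. \<forall>y\<in>Rvec m. \<forall>a b.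
      normS m (h x a - h y b) \<le> L * (normS m (x - y) + \<bar>a - b\<bar>))"

definition glob_lipschitz_g :: "nat \<Rightarrow> (vecS \<Rightarrow> real \<Rightarrow> real) \<Rightarrow> bool" where
  "glob_lipschitz_g m h \<longleftrightarrow> (\<exists>L. \<forall>x\<in>Rvec m. \<forall>y\<in>Rvec m. \<forall>a b.
      \<bar>h x a - h y b\<bar> \<le> L * (normS m (x - y) + \<bar>a - b\<bar>))"

definition network :: "nat \<Rightarrow> (nat \<times> nat) set \<Rightarrow> bool" where
  "network nb E \<longleftrightarrow> E \<subseteq> {1..nb} \<times> {1..nb}
     \<and> (\<forall>i j. (i, j) \<in> E \<longrightarrow> (j, i) \<notin> E)
     \<and> (\<forall>i\<in>{1..nb}. \<forall>j\<in>{1..nb}. (i, j) \<in> (E \<union> E\<inverse>)\<^sup>*)"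

definition fc :: "real \<Rightarrow> real \<Rightarrow> real \<Rightarrow> real \<Rightarrow> real \<Rightarrow> real" where
  "fc dlo dhi wlo whi w =
     (if w > whi then dhi else if wlo < w \<and> w \<le> whi then 0 else dlo)"

definition Fdc :: "real \<Rightarrow> real \<Rightarrow> real \<Rightarrow> real \<Rightarrow> real \<Rightarrow> real set" where
  "Fdc dlo dhi wlo whi w =
     (if w = whi then {0..dhi} else if w = wlo then {dlo..0}
      else {fc dlo dhi wlo whi w})"

text \<open>The set-valued right-hand side Q(x). Components outside E / N are set to 0
  so that Q(x) lives in the (canonically embedded) state space.\<close>
definition Qmap ::
  "nat \<Rightarrow> (nat \<times> nat) set \<Rightarrow> (bus \<Rightarrow> real) \<Rightarrow> (bus \<Rightarrow> real) \<Rightarrow> (nat \<times> nat \<Rightarrow> real)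
   \<Rightarrow> (bus \<Rightarrow> real) \<Rightarrow> (bus \<Rightarrow> real) \<Rightarrow> (bus \<Rightarrow> real) \<Rightarrow> (bus \<Rightarrow> real)
   \<Rightarrow> (bus \<Rightarrow> vecS \<Rightarrow> real \<Rightarrow> vecS) \<Rightarrow> (bus \<Rightarrow> vecS \<Rightarrow> real \<Rightarrow> real)
   \<Rightarrow> state \<Rightarrow> state set" where
  "Qmap nb E M pL B dlo dhi wlo whi f g x =
     (case x of (eta, omega, xs) \<Rightarrow>
       {(de, dw, dxs).
          (\<forall>e. de e = (if e \<in> E then omega (fst e) - omega (snd e) else 0))
        \<and> (\<forall>j. if j \<in> {1..nb} then
               (\<exists>v \<in> Fdc (dlo j) (dhi j) (wlo j) (whi j) (omega j).
                  dw j = (1 / M j) * (- pL j + g j (xs j) (- omega j) - v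
                           - (\<Sum>k\<in>{k. (j, k) \<in> E}. B (j, k) * sin (eta (j, k)))
                           + (\<Sum>i\<in>{i. (i, j) \<in> E}. B (i, j) * sin (eta (i, j)))))
             else dw j = 0)
        \<and> (\<forall>j. dxs j = (if j \<in> {1..nb} then f j (xs j) (- omega j) else (\<lambda>_. 0)))})"

definition zero_state :: state where
  "zero_state = ((\<lambda>_. 0), (\<lambda>_. 0), (\<lambda>_ _. 0))"

definition is_equilibrium ::
  "nat \<Rightarrow> (nat \<times> nat) set \<Rightarrow> (bus \<Rightarrow> nat) \<Rightarrow> (bus \<Rightarrow> real) \<Rightarrow> (bus \<Rightarrow> real) \<Rightarrow> (nat \<times> nat \<Rightarrow> real)
   \<Rightarrow> (bus \<Rightarrow> real) \<Rightarrow> (bus \<Rightarrow> real) \<Rightarrow> (bus \<Rightarrow> real) \<Rightarrow> (bus \<Rightarrow> real)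
   \<Rightarrow> (bus \<Rightarrow> vecS \<Rightarrow> real \<Rightarrow> vecS) \<Rightarrow> (bus \<Rightarrow> vecS \<Rightarrow> real \<Rightarrow> real)
   \<Rightarrow> state \<Rightarrow> bool" where
  "is_equilibrium nb E nj M pL B dlo dhi wlo whi f g x \<longleftrightarrow>
     (\<forall>j\<in>{1..nb}. snd (snd x) j \<in> Rvec (nj j))
     \<and> zero_state \<in> Qmap nb E M pL B dlo dhi wlo whi f g x"

end

theory Submission
  imports Defs
begin

text \<open>At an equilibrium every line carries \<open>\<omega>\<^sub>i - \<omega>\<^sub>j = 0\<close>, so by connectivity all
  frequencies agree; hypothesis (ii) forces the common value at one bus, hence everywhere,
  to be \<open>0\<close>. Since \<open>0\<close> lies strictly between the two switching thresholds,
  the Filippov map of the on-off load is the singleton \<open>{0}\<close> there, so \<open>Q(x\<^sup>*)\<close> contains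
  exactly one element, which must be \<open>0\<^sub>n\<close>.\<close>

lemma rtrancl_sym_closure_const:
  assumes "\<And>a b. (a, b) \<in> E \<Longrightarrow> h a = h b"
    and "(a, b) \<in> (E \<union> E\<inverse>)\<^sup>*"
  shows "h a = h b"
  using assms(2) by (induction rule: rtrancl_induct) (auto dest: assms(1))

lemma fc_at_zero:
  assumes "wlo < 0" "0 < whi"
  shows "fc dlo dhi wlo whi 0 = 0"
  using assms unfolding fc_def by auto

lemma Fdc_at_zero:
  assumes "wlo < 0" "0 < whi"
  shows "Fdc dlo dhi wlo whi 0 = {0}"
  using assms unfolding Fdc_def fc_def by auto

lemma zero_state_in_Qmap_edge:
  assumes "zero_state \<in> Qmap nb E M pL B dlo dhi wlo whi f g (eta, omega, xs)"
    and "(a, b) \<in> E"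
  shows "omega a = omega b"
proof -
  from assms(1) have "\<forall>e. 0 = (if e \<in> E then omega (fst e) - omega (snd e) else 0)"
    unfolding Qmap_def zero_state_def by simp
  with assms(2) show ?thesis by (metis fst_conv snd_conv eq_iff_diff_eq_0)
qed

lemma zero_state_in_Qmap_f:
  assumes "zero_state \<in> Qmap nb E M pL B dlo dhi wlo whi f g (eta, omega, xs)"
    and "j \<in> {1..nb}"
  shows "f j (xs j) (- omega j) = (\<lambda>_. 0)"
proof -
  from assms(1) have "(\<lambda>_. 0) = (if j \<in> {1..nb} then f j (xs j) (- omega j) else (\<lambda>_. 0))"
    unfolding Qmap_def zero_state_def by (auto dest!: spec[of _ j])
  with assms(2) show ?thesis by simp
qed

lemma network_equilibrium_omega_const:
  assumes "network nb E"
    and "zero_state \<in> Qmap nb E M pL B dlo dhi wlo whi f g (eta, omega, xs)"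
    and "i \<in> {1..nb}" "j \<in> {1..nb}"
  shows "omega i = omega j"
proof -
  have "(i, j) \<in> (E \<union> E\<inverse>)\<^sup>*"
    using assms(1,3,4) unfolding network_def by blast
  then show ?thesis
    using rtrancl_sym_closure_const zero_state_in_Qmap_edge[OF assms(2)] by metis
qed

lemma Qmap_subsingleton:
  assumes "\<And>j. j \<in> {1..nb} \<Longrightarrow> \<exists>c. Fdc (dlo j) (dhi j) (wlo j) (whi j) (omega j) = {c}"
    and "y \<in> Qmap nb E M pL B dlo dhi wlo whi f g (eta, omega, xs)"
    and "z \<in> Qmap nb E M pL B dlo dhi wlo whi f g (eta, omega, xs)"
  shows "y = z"
proof -
  obtain de dw dxs where y: "y = (de, dw, dxs)" by (cases y) auto
  obtain de' dw' dxs' where z: "z = (de', dw', dxs')" by (cases z) auto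
  note Q = assms(2,3)[unfolded y z Qmap_def, simplified]
  have "de = de'" "dxs = dxs'"
    using Q by auto
  moreover have "dw = dw'"
  proof
    fix j
    show "dw j = dw' j"
    proof (cases "j \<in> {1..nb}")
      case True
      then obtain c where "Fdc (dlo j) (dhi j) (wlo j) (whi j) (omega j) = {c}"
        using assms(1) by blast
      with True Q show ?thesis by (auto dest!: spec[of _ j])
    next
      case False
      with Q show ?thesis by (auto dest!: spec[of _ j])
    qed
  qed
  ultimately show ?thesis using y z by simp
qed

theorem lemma2:
  fixes nb :: nat and E :: "(nat \<times> nat) set" and nj :: "bus \<Rightarrow> nat"
    and M pL :: "bus \<Rightarrow> real" and B :: "nat \<times> nat \<Rightarrow> real"
    and dlo dhi wlo whi :: "bus \<Rightarrow> real"
    and f :: "bus \<Rightarrow> vecS \<Rightarrow> real \<Rightarrow> vecS" and g :: "bus \<Rightarrow> vecS \<Rightarrow> real \<Rightarrow> real"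
    and eta :: "nat \<times> nat \<Rightarrow> real" and omega :: "bus \<Rightarrow> real" and xs :: "bus \<Rightarrow> vecS"
  assumes net: "network nb E"
    and M_pos: "\<forall>j\<in>{1..nb}. M j > 0"
    and B_pos: "\<forall>e\<in>E. B e > 0"
    and d_bounds: "\<forall>j\<in>{1..nb}. dlo j \<le> 0 \<and> 0 \<le> dhi j"
    and w_bounds: "\<forall>j\<in>{1..nb}. wlo j < 0 \<and> 0 < whi j"
    and f_maps: "\<forall>j\<in>{1..nb}. \<forall>x\<in>Rvec (nj j). \<forall>w. f j x w \<in> Rvec (nj j)"
    and f_lip: "\<forall>j\<in>{1..nb}. glob_lipschitz_f (nj j) (f j)"
    and g_lip: "\<forall>j\<in>{1..nb}. glob_lipschitz_g (nj j) (g j)"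
    and hyp_i: "\<forall>j\<in>{1..nb}. \<exists>x\<in>Rvec (nj j). f j x 0 = (\<lambda>_. 0)"
    and hyp_ii: "\<exists>j\<in>{1..nb}. \<forall>xb\<in>Rvec (nj j). \<forall>wb.
                    f j xb (- wb) = (\<lambda>_. 0) \<longrightarrow> wb = 0"
    and hyp_iii: "\<exists>x. is_equilibrium nb E nj M pL B dlo dhi wlo whi f g x"
    and eq: "is_equilibrium nb E nj M pL B dlo dhi wlo whi f g (eta, omega, xs)"
  shows "(\<forall>j\<in>{1..nb}. omega j = 0)
       \<and> Qmap nb E M pL B dlo dhi wlo whi f g (eta, omega, xs) = {zero_state}
       \<and> (\<forall>j\<in>{1..nb}. fc (dlo j) (dhi j) (wlo j) (whi j) (omega j) = 0)"
proof -
  let ?Q = "Qmap nb E M pL B dlo dhi wlo whi f g (eta, omega, xs)"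
  have zero_in_Q: "zero_state \<in> ?Q" and xs_in: "\<forall>j\<in>{1..nb}. xs j \<in> Rvec (nj j)"
    using eq unfolding is_equilibrium_def by auto
  obtain j0 where j0: "j0 \<in> {1..nb}"
    and rigid: "\<forall>xb\<in>Rvec (nj j0). \<forall>wb. f j0 xb (- wb) = (\<lambda>_. 0) \<longrightarrow> wb = 0"
    using hyp_ii by blast
  have "omega j0 = 0"
    using rigid xs_in j0 zero_state_in_Qmap_f[OF zero_in_Q j0] by blast
  then have omega0: "\<forall>j\<in>{1..nb}. omega j = 0"
    using network_equilibrium_omega_const[OF net zero_in_Q _ j0] by auto
  then have "\<And>j. j \<in> {1..nb} \<Longrightarrow> Fdc (dlo j) (dhi j) (wlo j) (whi j) (omega j) = {0}"
    using w_bounds Fdc_at_zero by simp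
  then have "?Q = {zero_state}"
    using zero_in_Q Qmap_subsingleton[of nb dlo dhi wlo whi omega] by blast
  moreover have "\<forall>j\<in>{1..nb}. fc (dlo j) (dhi j) (wlo j) (whi j) (omega j) = 0"
    using omega0 w_bounds fc_at_zero by simp
  ultimately show ?thesis using omega0 by blast
qed

end
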